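(* Let $b\ge 2$ and $k\ge 1$ be integers, set $B=b^k$, let $m\ge 1$ be an integer with $\gcd(m,b)=1$, and let $r$ be an integer with $0\le r<m$. Call an integer $s\ge 1$ admissible if $s\equiv r\pmod m$ and $\gcd(s,b)=1$. For admissible $s$, define $\omega_s:=\operatorname{ord}_{ms}(B)$ and $n_s:=\sum_{j=0}^{s-1} B^{j\omega_s}$. If $s$ and $s'$ are distinct admissible integers, then $n_s\neq n_{s'}$.
   Context: For integers $a$ and $N\ge 1$ with $\gcd(a,N)=1$, $\operatorname{ord}_N(a)$ denotes the least positive integer $\omega$ with $a^\omega\equiv 1\pmod N$ (so $\operatorname{ord}_1(a)=1$). *)

theory Defs
  imports "HOL-Number_Theory.Number_Theory"
begin

definition admissible :: "nat \<Rightarrow> nat \<Rightarrow> nat \<Rightarrow> nat \<Rightarrow> bool" where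
  "admissible b m r s \<longleftrightarrow> s \<ge> 1 \<and> [s = r] (mod m) \<and> coprime s b"

definition n_s :: "nat \<Rightarrow> nat \<Rightarrow> nat \<Rightarrow> nat" where
  "n_s B m s = (\<Sum>j<s. B ^ (j * ord (m * s) B))"

end

theory Submission
  imports Defs
begin

text \<open>As \<open>\<omega>\<^sub>s \<ge> 1\<close>, \<open>n\<^sub>s\<close> is the repunit with \<open>s\<close> digits in base \<open>q = B^\<omega>\<^sub>s\<close>.
  For \<open>s \<ge> 2\<close>, \<open>n\<^sub>s - 1 = q \<cdot> u\<close> with \<open>u \<equiv> 1 (mod B)\<close>, so \<open>\<omega>\<^sub>s\<close> is read off \<open>n\<^sub>s\<close> as the
  exact power of \<open>B\<close> dividing \<open>n\<^sub>s - 1\<close>; for a fixed base, repunits strictly increase with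
  the number of digits, so \<open>n\<^sub>s\<close> then determines \<open>s\<close>. The case \<open>s = 1\<close> is the only one with
  \<open>n\<^sub>s = 1\<close>.\<close>

definition repunit :: "nat \<Rightarrow> nat \<Rightarrow> nat" where
  "repunit q s = (\<Sum>j<s. q ^ j)"

lemma repunit_Suc: "repunit q (Suc s) = 1 + q * repunit q s"
  unfolding repunit_def sum.lessThan_Suc_shift by (simp add: sum_distrib_left)

lemma repunit_1 [simp]: "repunit q 1 = 1"
  by (simp add: repunit_def)

lemma strict_mono_repunit:
  assumes "q > 0"
  shows "strict_mono (repunit q)"
  unfolding strict_mono_Suc_iff using assms by (simp add: repunit_def)

lemma not_dvd_repunit:
  fixes B q :: nat
  assumes "B \<noteq> 1" and "B dvd q"
  shows "\<not> B dvd repunit q (Suc s)"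
proof -
  have "B dvd q * repunit q s"
    using assms(2) by simp
  then have "B dvd 1 + q * repunit q s \<longleftrightarrow> B dvd 1"
    by (rule dvd_add_left_iff)
  then show ?thesis
    using assms(1) by (simp add: repunit_Suc)
qed

lemma power_mult_eq_imp_exponent_eq:
  fixes B x y a c :: nat
  assumes "B > 0" and "\<not> B dvd x" and "\<not> B dvd y" and "B ^ a * x = B ^ c * y"
  shows "a = c"
proof -
  have "a \<le> c" if "B ^ a * x = B ^ c * y" "\<not> B dvd y" for a c x y
  proof (rule ccontr)
    assume "\<not> a \<le> c"
    then have "B ^ a = B ^ c * B ^ (a - c)"
      by (simp add: power_add [symmetric])
    then have "B ^ c * y = B ^ c * (B ^ (a - c) * x)"
      using that(1) by (metis mult.assoc)
    then have "y = B ^ (a - c) * x"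
      using \<open>B > 0\<close> by (metis mult_left_cancel power_not_zero not_gr0)
    moreover have "B dvd B ^ (a - c)"
      using \<open>\<not> a \<le> c\<close> by simp
    ultimately show False
      using that(2) by simp
  qed
  from this [of a x c y] this [of c y a x] show ?thesis
    using assms by simp
qed

lemma repunit_power_eq_imp_eq:
  fixes B w w' s s' :: nat
  assumes "B \<ge> 2" and "w \<ge> 1" and "w' \<ge> 1" and "s \<ge> 1" and "s' \<ge> 1"
    and eq: "repunit (B ^ w) s = repunit (B ^ w') s'"
  shows "s = s'"
proof -
  have inj: "repunit (B ^ v) t = repunit (B ^ v) t' \<longleftrightarrow> t = t'" for v t t'
    using strict_mono_eq [OF strict_mono_repunit] assms(1) by simp
  show ?thesis
  proof (cases "s = 1 \<or> s' = 1")
    case True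
    then show ?thesis
      using eq inj [of w s 1] inj [of w' s' 1] by (metis repunit_1)
  next
    case False
    define t t' where "t = s - 2" and "t' = s' - 2"
    have s: "s = Suc (Suc t)" and s': "s' = Suc (Suc t')"
      using False assms(4,5) by (auto simp: t_def t'_def)
    have "\<not> B dvd repunit (B ^ w) (Suc t)" "\<not> B dvd repunit (B ^ w') (Suc t')"
      using not_dvd_repunit [of B] assms(1-3) by simp_all
    moreover have "B ^ w * repunit (B ^ w) (Suc t) = B ^ w' * repunit (B ^ w') (Suc t')"
      using eq unfolding s s' repunit_Suc [of _ "Suc _"] by simp
    moreover have "B > 0"
      using assms(1) by simp
    ultimately have "w = w'"
      by (meson power_mult_eq_imp_exponent_eq)
    then show ?thesis
      using eq inj by simp
  qed
qed

lemma n_s_eq_repunit: "n_s (b ^ k) m s = repunit (b ^ (k * ord (m * s) (b ^ k))) s"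
  unfolding n_s_def repunit_def by (simp add: power_mult [symmetric] ac_simps)

theorem lemma5p2:
  fixes b k m r s s' :: nat
  assumes "b \<ge> 2" and "k \<ge> 1" and "m \<ge> 1" and "coprime m b" and "r < m"
    and "admissible b m r s" and "admissible b m r s'" and "s \<noteq> s'"
  shows "n_s (b ^ k) m s \<noteq> n_s (b ^ k) m s'"
proof
  have exponent_pos: "k * ord (m * t) (b ^ k) \<ge> 1" if "admissible b m r t" for t
    using that assms(2,4) by (simp add: admissible_def Suc_le_eq)
  have "s \<ge> 1" "s' \<ge> 1"
    using assms(6,7) by (simp_all add: admissible_def)
  assume "n_s (b ^ k) m s = n_s (b ^ k) m s'"
  then have "s = s'"
    unfolding n_s_eq_repunit
    using repunit_power_eq_imp_eq [OF assms(1) exponent_pos [OF assms(6)] exponent_pos [OF assms(7)]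
        \<open>s \<ge> 1\<close> \<open>s' \<ge> 1\<close>]
    by blast
  with \<open>s \<noteq> s'\<close> show False ..
qed

end
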